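(* If $0\le p<t\le 1$, then there exists a stake sequence $\gamma$ with $\pi(p,t)=\mathbf P(S_\gamma\ge t)$. Furthermore, for fixed $p$, the function $t\mapsto\pi(p,t)$ is left-continuous.
   Context: Let $\beta_1,\beta_2,\ldots$ be independent Bernoulli random variables with success probability $p$. A stake sequence is a sequence $\gamma=(c_1,c_2,\ldots)$ of non-negative reals with $c_1\ge c_2\ge\cdots$ and $\sum_i c_i=1$; write $S_\gamma=\sum_i c_i\beta_i$. For $0\le p\le t\le 1$ define $\pi(p,t)=\sup\{\mathbf P(S_\gamma\ge t)\mid \gamma \text{ a stake sequence}\}$. *)

theory Defs
  imports "HOL-Probability.Probability"
begin

text \<open>The joint law of the i.i.d. Bernoulli(p) sequence beta_1, beta_2, ...
  (indexed from 0 here), as a probability measure on nat => bool.\<close>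
definition bern_seq :: "real \<Rightarrow> (nat \<Rightarrow> bool) measure" where
  "bern_seq p = (\<Pi>\<^sub>M i\<in>(UNIV::nat set). measure_pmf (bernoulli_pmf p))"

definition stake_seq :: "(nat \<Rightarrow> real) \<Rightarrow> bool" where
  "stake_seq c \<longleftrightarrow> (\<forall>i. 0 \<le> c i) \<and> decseq c \<and> c sums 1"

definition S_gamma :: "(nat \<Rightarrow> real) \<Rightarrow> (nat \<Rightarrow> bool) \<Rightarrow> real" where
  "S_gamma c \<omega> = (\<Sum>i. c i * (if \<omega> i then 1 else 0))"

definition prob_ge :: "real \<Rightarrow> (nat \<Rightarrow> real) \<Rightarrow> real \<Rightarrow> real" where
  "prob_ge p c t = measure (bern_seq p) {\<omega> \<in> space (bern_seq p). S_gamma c \<omega> \<ge> t}"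

definition pi_fun :: "real \<Rightarrow> real \<Rightarrow> real" where
  "pi_fun p t = Sup {prob_ge p c t | c. stake_seq c}"

end

theory Submission
  imports Defs "HOL-Library.Diagonal_Subsequence"
begin

text \<open>Stake sequences are compact for pointwise convergence, but a pointwise limit \<open>c\<close> may
  lose mass. Along a convergent sequence of stake sequences the stakes beyond a fixed index are
  uniformly small, so by Hoeffding's inequality their payout is close to \<open>p\<close> times their
  total; hence the limsup of \<open>P(S \<ge> t\<^sub>n)\<close> is at most
  \<open>P(S\<^sub>c + (1 - \<Sigma> c) p \<ge> t)\<close>, using that this tail is left-continuous in \<open>t\<close>. For
  \<open>t > p\<close> the rescaled stake sequence \<open>c / \<Sigma> c\<close> does at least as well. Applied to
  near-maximisers at \<open>t\<close> this yields a maximiser; applied to near-maximisers at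
  \<open>t\<^sub>n \<up> s\<close> it yields \<open>limsup \<pi>(p, t\<^sub>n) \<le> \<pi>(p, s)\<close>, which together with the
  monotonicity of \<open>\<pi>\<close> in \<open>t\<close> is left-continuity.\<close>

lemma prob_space_bern_seq: "0 \<le> p \<Longrightarrow> p \<le> 1 \<Longrightarrow> prob_space (bern_seq p)"
  unfolding bern_seq_def by (intro prob_space_PiM measure_pmf.prob_space_axioms)

lemma space_bern_seq [simp]: "space (bern_seq p) = UNIV"
  unfolding bern_seq_def by (simp add: space_PiM)

lemma measurable_bern_seq_coord [measurable]:
  "(\<lambda>\<omega>. \<omega> i) \<in> measurable (bern_seq p) (measure_pmf (bernoulli_pmf p))"
  unfolding bern_seq_def by (rule measurable_component_singleton) simp

lemma measurable_bern_seq_coord_count_space [measurable]: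
  "(\<lambda>\<omega>. \<omega> i) \<in> measurable (bern_seq p) (count_space UNIV)"
  using measurable_bern_seq_coord
  by (simp add: measurable_cong_sets[OF refl sets_measure_pmf_count_space])

lemma sets_bern_seq_Collect:
  "Measurable.pred (bern_seq p) P \<Longrightarrow> {\<omega>. P \<omega>} \<in> sets (bern_seq p)"
  by (drule predE) simp

lemma distr_bern_seq_coord:
  "distr (bern_seq p) (measure_pmf (bernoulli_pmf p)) (\<lambda>\<omega>. \<omega> i) = measure_pmf (bernoulli_pmf p)"
proof -
  interpret product_prob_space "\<lambda>_::nat. measure_pmf (bernoulli_pmf p)" UNIV
    by unfold_locales
  show ?thesis
    unfolding bern_seq_def by (rule PiM_component) simp
qed

lemma indep_vars_bern_seq_coord:
  assumes "0 \<le> p" "p \<le> 1"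
  shows "prob_space.indep_vars (bern_seq p) (\<lambda>_. measure_pmf (bernoulli_pmf p)) (\<lambda>i \<omega>. \<omega> i) UNIV"
proof -
  interpret prob_space "bern_seq p"
    using prob_space_bern_seq[OF assms] .
  show ?thesis
  proof (subst indep_vars_iff_distr_eq_PiM)
    show "distr (bern_seq p) (\<Pi>\<^sub>M i\<in>UNIV. measure_pmf (bernoulli_pmf p)) (\<lambda>x. \<lambda>i\<in>UNIV. x i) =
      (\<Pi>\<^sub>M i\<in>UNIV. distr (bern_seq p) (measure_pmf (bernoulli_pmf p)) (\<lambda>\<omega>. \<omega> i))"
      by (simp add: distr_bern_seq_coord restrict_UNIV[abs_def]) (simp add: bern_seq_def)
  qed simp_all
qed

lemma integral_bern_seq_coord:
  assumes "0 \<le> p" "p \<le> 1"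
  shows "integral\<^sup>L (bern_seq p) (\<lambda>\<omega>. of_bool (\<omega> i) :: real) = p"
proof -
  have "integral\<^sup>L (bern_seq p) (\<lambda>\<omega>. of_bool (\<omega> i) :: real) =
      integral\<^sup>L (distr (bern_seq p) (measure_pmf (bernoulli_pmf p)) (\<lambda>\<omega>. \<omega> i)) (\<lambda>b. of_bool b)"
    by (rule integral_distr[symmetric]) simp_all
  then show ?thesis
    using assms by (simp add: distr_bern_seq_coord)
qed

lemma S_gamma_eq: "S_gamma c \<omega> = (\<Sum>i. c i * of_bool (\<omega> i))"
  by (simp add: S_gamma_def of_bool_def)

lemma summable_mult_of_bool:
  fixes c :: "nat \<Rightarrow> real"
  assumes "summable c" "\<And>i. 0 \<le> c i"
  shows "summable (\<lambda>i. c i * of_bool (b i))"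
  by (rule summable_comparison_test'[OF assms(1)]) (simp add: assms(2))

lemma borel_measurable_S_gamma:
  assumes "summable c" "\<And>i. 0 \<le> c i"
  shows "S_gamma c \<in> borel_measurable (bern_seq p)"
proof (rule borel_measurable_LIMSEQ_real)
  show "(\<lambda>n. \<Sum>i<n. c i * of_bool (\<omega> i)) \<longlonglongrightarrow> S_gamma c \<omega>" for \<omega>
    unfolding S_gamma_eq by (rule summable_LIMSEQ[OF summable_mult_of_bool[OF assms]])
qed measurable

lemma sum_le_S_gamma:
  assumes "summable c" "\<And>i. 0 \<le> c i" "finite I"
  shows "(\<Sum>i\<in>I. c i * of_bool (\<omega> i)) \<le> S_gamma c \<omega>"
  unfolding S_gamma_eq
  by (rule sum_le_suminf[OF summable_mult_of_bool[OF assms(1,2)] assms(3)]) (simp add: assms(2))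

lemma S_gamma_le_sum_plus_tail:
  assumes "summable c" "\<And>i. 0 \<le> c i"
  shows "S_gamma c \<omega> \<le> (\<Sum>i<N. c i * of_bool (\<omega> i)) + (suminf c - (\<Sum>i<N. c i))"
proof -
  have loss: "summable (\<lambda>i. c i * (1 - of_bool (\<omega> i)))"
    by (rule summable_comparison_test'[OF assms(1)]) (simp add: assms(2))
  have "S_gamma c \<omega> = suminf c - (\<Sum>i. c i * (1 - of_bool (\<omega> i)))"
    unfolding S_gamma_eq using suminf_diff[OF assms(1) loss] by (simp add: algebra_simps)
  moreover have "(\<Sum>i<N. c i * (1 - of_bool (\<omega> i))) \<le> (\<Sum>i. c i * (1 - of_bool (\<omega> i)))"
    by (rule sum_le_suminf[OF loss]) (simp_all add: assms(2))
  ultimately show ?thesis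
    by (simp add: algebra_simps sum_subtractf sum_distrib_left)
qed

lemma bern_seq_weighted_sum_tail_bound:
  assumes p: "0 \<le> p" "p \<le> 1" and I: "finite I"
    and a: "\<And>i. i \<in> I \<Longrightarrow> 0 \<le> a i \<and> a i \<le> \<delta>" and mass: "sum a I \<le> 1"
    and "\<eta> > 0" "\<delta> > 0"
  shows "measure (bern_seq p) {\<omega>. p * sum a I + \<eta> \<le> (\<Sum>i\<in>I. a i * of_bool (\<omega> i))}
    \<le> exp (-2 * \<eta>\<^sup>2 / \<delta>)"
proof (cases "(\<Sum>i\<in>I. (a i)\<^sup>2) = 0")
  case True
  then have "\<forall>i\<in>I. a i = 0"
    using I by (simp add: sum_nonneg_eq_0_iff)
  then show ?thesis
    using \<open>\<eta> > 0\<close> by simp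
next
  case False
  then have sq_pos: "(\<Sum>i\<in>I. (a i)\<^sup>2) > 0"
    by (simp add: order_less_le sum_nonneg)
  interpret P: prob_space "bern_seq p"
    using prob_space_bern_seq[OF p] .
  have "P.indep_vars (\<lambda>_. measure_pmf (bernoulli_pmf p)) (\<lambda>i \<omega>. \<omega> i) I"
    by (rule P.indep_vars_subset[OF indep_vars_bern_seq_coord[OF p]]) simp
  then have indep: "P.indep_vars (\<lambda>_. borel) (\<lambda>i \<omega>. a i * of_bool (\<omega> i)) I"
    by (rule P.indep_vars_compose2[where Y = "\<lambda>i b. a i * of_bool b"]) simp
  interpret H: Hoeffding_ineq "bern_seq p" I "\<lambda>i \<omega>. a i * of_bool (\<omega> i)" "\<lambda>_. 0" a
      "\<Sum>i\<in>I. P.expectation (\<lambda>\<omega>. a i * of_bool (\<omega> i))"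
    by unfold_locales (auto simp: I indep a)
  have mean: "(\<Sum>i\<in>I. P.expectation (\<lambda>\<omega>. a i * of_bool (\<omega> i))) = p * sum a I"
    using integral_bern_seq_coord[OF p] by (simp add: sum_distrib_left mult.commute)
  have "(\<Sum>i\<in>I. (a i)\<^sup>2) \<le> (\<Sum>i\<in>I. \<delta> * a i)"
    using a by (intro sum_mono) (simp add: power2_eq_square mult_right_mono)
  also have "\<dots> \<le> \<delta>"
    using mass \<open>\<delta> > 0\<close> by (simp flip: sum_distrib_left)
  finally have "2 * \<eta>\<^sup>2 / \<delta> \<le> 2 * \<eta>\<^sup>2 / (\<Sum>i\<in>I. (a i)\<^sup>2)"
    using sq_pos by (intro divide_left_mono) auto
  then have "exp (-2 * \<eta>\<^sup>2 / (\<Sum>i\<in>I. (a i)\<^sup>2)) \<le> exp (-2 * \<eta>\<^sup>2 / \<delta>)"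
    by simp
  moreover have "measure (bern_seq p) {\<omega>. p * sum a I + \<eta> \<le> (\<Sum>i\<in>I. a i * of_bool (\<omega> i))}
      \<le> exp (-2 * \<eta>\<^sup>2 / (\<Sum>i\<in>I. (a i)\<^sup>2))"
    using H.Hoeffding_ineq_ge[of \<eta>] sq_pos \<open>\<eta> > 0\<close> unfolding mean by simp
  ultimately show ?thesis
    by linarith
qed

lemma (in prob_space) prob_ge_tendsto_at_left:
  fixes X :: "'a \<Rightarrow> real"
  assumes "random_variable borel X"
  shows "((\<lambda>s. prob {x\<in>space M. s \<le> X x}) \<longlongrightarrow> prob {x\<in>space M. t \<le> X x}) (at_left t)"
proof -
  interpret D: real_distribution "distr M borel (\<lambda>x. - X x)"
    using assms by simp
  have cdf: "prob {x\<in>space M. s \<le> X x} = cdf (distr M borel (\<lambda>x. - X x)) (- s)" for s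
    using assms by (simp add: cdf_def measure_distr vimage_def Int_def conj_commute)
  have "(cdf (distr M borel (\<lambda>x. - X x)) \<longlongrightarrow> cdf (distr M borel (\<lambda>x. - X x)) (- t)) (at_right (- t))"
    using D.cdf_is_right_cont by (simp add: continuous_within)
  then show ?thesis
    unfolding cdf by (simp add: at_left_minus filterlim_filtermap)
qed

lemma stake_seqD:
  assumes "stake_seq c"
  shows "0 \<le> c i" "decseq c" "summable c" "suminf c = 1"
  using assms by (auto simp: stake_seq_def sums_iff)

lemma stake_seq_le_one:
  assumes "stake_seq c"
  shows "c i \<le> 1"
  using sum_le_suminf[of c "{i}"] stake_seqD[OF assms] by simp

lemma stake_seq_single: "stake_seq (\<lambda>i. of_bool (i = 0))"
  unfolding stake_seq_def decseq_def using sums_single[of 0 "\<lambda>_. 1::real"]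
  by (auto simp: of_bool_def)

lemma stake_seq_pointwise_limit:
  assumes cn: "\<And>n. stake_seq (cn n)" and lim: "\<And>i. (\<lambda>n. cn n i) \<longlonglongrightarrow> c i"
  shows "0 \<le> c i" "decseq c" "summable c" "suminf c \<le> 1"
proof -
  show nonneg: "0 \<le> c i" for i
    by (rule LIMSEQ_le_const[OF lim]) (simp add: stake_seqD[OF cn])
  show "decseq c"
    unfolding decseq_def
    by (intro allI impI LIMSEQ_le[OF lim lim]) (meson cn decseqD stake_seqD(2))
  have partial: "(\<Sum>i<N. c i) \<le> 1" for N
  proof (rule LIMSEQ_le_const2)
    show "(\<lambda>n. \<Sum>i<N. cn n i) \<longlonglongrightarrow> (\<Sum>i<N. c i)"
      by (intro tendsto_sum lim)
    show "\<exists>N0. \<forall>n\<ge>N0. (\<Sum>i<N. cn n i) \<le> 1"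
      using sum_le_suminf stake_seqD[OF cn] by (metis finite_lessThan)
  qed
  show "summable c"
    by (rule summableI_nonneg_bounded[where x = 1]) (use nonneg partial in auto)
  then show "suminf c \<le> 1"
    by (intro suminf_le_const partial)
qed

lemma bounded_pointwise_convergent_subseq:
  fixes f :: "nat \<Rightarrow> nat \<Rightarrow> 'a::heine_borel"
  assumes "\<And>i. bounded (range (\<lambda>n. f n i))"
  shows "\<exists>r. strict_mono r \<and> (\<forall>i. convergent (\<lambda>k. f (r k) i))"
proof -
  interpret subseqs "\<lambda>i s. convergent (\<lambda>k. f (s k) i)"
  proof
    fix i and s :: "nat \<Rightarrow> nat"
    have "bounded (range (\<lambda>k. f (s k) i))"
      by (rule bounded_subset[OF assms[of i]]) blast
    from bounded_imp_convergent_subsequence[OF this]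
    obtain l r where "strict_mono r" "((\<lambda>k. f (s k) i) \<circ> r) \<longlonglongrightarrow> l"
      by blast
    then show "\<exists>r. strict_mono r \<and> convergent (\<lambda>k. f ((s \<circ> r) k) i)"
      unfolding convergent_def comp_def by blast
  qed
  have "convergent (\<lambda>k. f (diagseq k) i)" for i
  proof -
    have "convergent (\<lambda>k. f ((diagseq \<circ> (+) (Suc i)) k) i)"
    proof (rule diagseq_holds)
      fix r s :: "nat \<Rightarrow> nat" and n :: nat
      assume "strict_mono r" "convergent (\<lambda>k. f (s k) n)"
      then show "convergent (\<lambda>k. f ((s \<circ> r) k) n)"
        using convergent_subseq_convergent[of "\<lambda>k. f (s k) n" r] by (simp add: comp_def)
    qed
    then show ?thesis
      using convergent_ignore_initial_segment[of "\<lambda>k. f (diagseq k) i" "Suc i"]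
      by (simp add: comp_def add.commute)
  qed
  then show ?thesis
    using subseq_diagseq by blast
qed

lemma stake_seq_convergent_subseq:
  fixes cn :: "nat \<Rightarrow> nat \<Rightarrow> real"
  assumes "\<And>n. stake_seq (cn n)"
  obtains r c where "strict_mono r" "\<And>i. (\<lambda>k. cn (r k) i) \<longlonglongrightarrow> c i"
proof -
  have "bounded (range (\<lambda>n. cn n i))" for i
    using stake_seqD(1)[OF assms] stake_seq_le_one[OF assms]
    by (intro bounded_subset[OF bounded_closed_interval[of 0 1]]) (auto simp: image_subset_iff)
  then obtain r where "strict_mono r" "\<forall>i. convergent (\<lambda>k. cn (r k) i)"
    using bounded_pointwise_convergent_subseq[of "\<lambda>n i. cn n i"] by blast
  then show ?thesis
    using that[of r "\<lambda>i. lim (\<lambda>k. cn (r k) i)"] by (simp add: convergent_LIMSEQ_iff)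
qed

lemma prob_ge_le_one:
  assumes "0 \<le> p" "p \<le> 1"
  shows "prob_ge p c u \<le> 1"
proof -
  interpret prob_space "bern_seq p"
    using prob_space_bern_seq[OF assms] .
  show ?thesis
    unfolding prob_ge_def by simp
qed

lemma prob_ge_antimono:
  assumes "0 \<le> p" "p \<le> 1" "stake_seq c" "u \<le> v"
  shows "prob_ge p c v \<le> prob_ge p c u"
proof -
  interpret prob_space "bern_seq p"
    using prob_space_bern_seq[OF assms(1,2)] .
  have [measurable]: "S_gamma c \<in> borel_measurable (bern_seq p)"
    using borel_measurable_S_gamma stake_seqD[OF assms(3)] by blast
  show ?thesis
    unfolding prob_ge_def using assms(4)
    by (intro finite_measure_mono) (auto intro: sets_bern_seq_Collect)
qed

lemma bdd_above_prob_ge: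
  "0 \<le> p \<Longrightarrow> p \<le> 1 \<Longrightarrow> bdd_above {prob_ge p c u | c. stake_seq c}"
  using prob_ge_le_one by (intro bdd_aboveI[where M = 1]) auto

lemma prob_ge_le_pi_fun:
  "0 \<le> p \<Longrightarrow> p \<le> 1 \<Longrightarrow> stake_seq c \<Longrightarrow> prob_ge p c u \<le> pi_fun p u"
  unfolding pi_fun_def by (rule cSup_upper[OF _ bdd_above_prob_ge]) auto

lemma pi_fun_approx:
  assumes "0 \<le> p" "p \<le> 1" "\<epsilon> > 0"
  obtains c where "stake_seq c" "pi_fun p u < prob_ge p c u + \<epsilon>"
proof -
  have "pi_fun p u - \<epsilon> < Sup {prob_ge p c u | c. stake_seq c}"
    using assms(3) by (simp add: pi_fun_def)
  then show ?thesis
    using that stake_seq_single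
    by (subst (asm) less_cSup_iff[OF _ bdd_above_prob_ge[OF assms(1,2)]]) force+
qed

lemma pi_fun_antimono:
  assumes "0 \<le> p" "p \<le> 1" "u \<le> v"
  shows "pi_fun p v \<le> pi_fun p u"
  unfolding pi_fun_def[of p v]
proof (rule cSup_least)
  show "{prob_ge p c v | c. stake_seq c} \<noteq> {}"
    using stake_seq_single by blast
next
  fix x
  assume "x \<in> {prob_ge p c v | c. stake_seq c}"
  then obtain c where c: "stake_seq c" "x = prob_ge p c v"
    by blast
  then show "x \<le> pi_fun p u"
    using prob_ge_antimono[OF assms(1,2) c(1) assms(3)] prob_ge_le_pi_fun[OF assms(1,2) c(1), of u]
    by linarith
qed

text \<open>The law of \<open>S_gamma\<close> along a pointwise limit \<open>c\<close> of stake sequences: the mass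
  \<open>1 - suminf c\<close> lost in the limit sits on ever smaller stakes, and by the law of large
  numbers their payout concentrates at \<open>p\<close> times that mass.\<close>
definition prob_ge_lim :: "real \<Rightarrow> (nat \<Rightarrow> real) \<Rightarrow> real \<Rightarrow> real" where
  "prob_ge_lim p c t = measure (bern_seq p) {\<omega>. t \<le> S_gamma c \<omega> + (1 - suminf c) * p}"

text \<open>Above \<open>p\<close>, the lost mass is better spent by rescaling the remaining stakes.\<close>
lemma prob_ge_lim_le_rescaled:
  assumes p: "0 \<le> p" "p \<le> 1" "p < u"
    and c: "\<And>i. 0 \<le> c i" "decseq c" "summable c" "suminf c \<le> 1"
  obtains c' where "stake_seq c'" "prob_ge_lim p c u \<le> prob_ge p c' u"
proof (cases "suminf c = 0")
  case True
  then have "c = (\<lambda>_. 0)"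
    using suminf_eq_zero_iff[OF c(3)] c(1) by auto
  then have "prob_ge_lim p c u = 0"
    using p(3) by (simp add: prob_ge_lim_def S_gamma_def)
  then show ?thesis
    using that[OF stake_seq_single] by (simp add: prob_ge_def)
next
  case False
  interpret prob_space "bern_seq p"
    using prob_space_bern_seq[OF p(1,2)] .
  define \<sigma> where "\<sigma> = suminf c"
  have "\<sigma> > 0"
    using False suminf_nonneg[OF c(3)] c(1) by (force simp: \<sigma>_def)
  define c' where "c' = (\<lambda>i. c i / \<sigma>)"
  have "stake_seq c'"
    unfolding stake_seq_def
  proof (intro conjI allI)
    show "0 \<le> c' i" for i
      using c(1) \<open>\<sigma> > 0\<close> by (simp add: c'_def)
    show "decseq c'"
      using c(2) \<open>\<sigma> > 0\<close> by (auto simp: c'_def decseq_def divide_right_mono)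
    show "c' sums 1"
      using sums_divide[OF summable_sums[OF c(3)], of \<sigma>] \<open>\<sigma> > 0\<close> by (simp add: c'_def \<sigma>_def)
  qed
  have S_c': "S_gamma c' \<omega> = S_gamma c \<omega> / \<sigma>" for \<omega>
    using suminf_divide[OF summable_mult_of_bool[OF c(3,1)], of \<omega> \<sigma>]
    by (simp add: S_gamma_eq c'_def algebra_simps)
  have "{\<omega>. u \<le> S_gamma c \<omega> + (1 - suminf c) * p} \<subseteq> {\<omega>. u \<le> S_gamma c' \<omega>}"
  proof safe
    fix \<omega>
    assume "u \<le> S_gamma c \<omega> + (1 - suminf c) * p"
    moreover have "(1 - \<sigma>) * p \<le> (1 - \<sigma>) * u"
      using c(4) p(3) by (intro mult_left_mono) (auto simp: \<sigma>_def)
    ultimately have "\<sigma> * u \<le> S_gamma c \<omega>"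
      by (simp add: \<sigma>_def algebra_simps)
    then show "u \<le> S_gamma c' \<omega>"
      using \<open>\<sigma> > 0\<close> by (simp add: S_c' field_simps)
  qed
  moreover have [measurable]: "S_gamma c' \<in> borel_measurable (bern_seq p)"
    using borel_measurable_S_gamma stake_seqD[OF \<open>stake_seq c'\<close>] by blast
  ultimately have "prob_ge_lim p c u \<le> prob_ge p c' u"
    unfolding prob_ge_lim_def prob_ge_def
    by (intro finite_measure_mono) (auto intro: sets_bern_seq_Collect)
  then show ?thesis
    by (rule that[OF \<open>stake_seq c'\<close>])
qed

lemma S_gamma_le_lim_plus_deviation:
  assumes a: "stake_seq a" and c: "summable c" "\<And>i. 0 \<le> c i"
    and p: "0 \<le> p" "p \<le> 1" and "K \<le> N"
    and close: "(\<Sum>i<K. \<bar>a i - c i\<bar>) \<le> \<eta>"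
    and c_mass: "suminf c - \<eta> \<le> (\<Sum>i<K. c i)"
    and a_mass: "1 - \<eta> \<le> (\<Sum>i<N. a i)"
  shows "S_gamma a \<omega> \<le> S_gamma c \<omega> + (1 - suminf c) * p + 4 * \<eta>
    + ((\<Sum>i\<in>{K..<N}. a i * of_bool (\<omega> i)) - p * sum a {K..<N})"
proof -
  have split: "(\<Sum>i<N. f i) = (\<Sum>i<K. f i) + (\<Sum>i\<in>{K..<N}. f i)" for f :: "nat \<Rightarrow> real"
    using sum.atLeastLessThan_concat[of 0 K N f] \<open>K \<le> N\<close> by (simp add: atLeast0LessThan)
  have "0 \<le> \<eta>"
    using close by (smt (verit) sum_nonneg abs_ge_zero)
  have head: "(\<Sum>i<K. a i * of_bool (\<omega> i)) \<le> S_gamma c \<omega> + \<eta>"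
  proof -
    have "(\<Sum>i<K. a i * of_bool (\<omega> i)) \<le> (\<Sum>i<K. c i * of_bool (\<omega> i) + \<bar>a i - c i\<bar>)"
      by (intro sum_mono) (auto simp: of_bool_def abs_if)
    also have "\<dots> \<le> S_gamma c \<omega> + \<eta>"
      using sum_le_S_gamma[OF c, of "{..<K}" \<omega>] close by (simp add: sum.distrib)
    finally show ?thesis .
  qed
  have "sum a {K..<N} \<le> 1 - suminf c + 2 * \<eta>"
  proof -
    have "(\<Sum>i<N. a i) \<le> 1"
      using sum_le_suminf[of a "{..<N}"] stake_seqD[OF a] by simp
    moreover have "(\<Sum>i<K. c i) - (\<Sum>i<K. a i) \<le> (\<Sum>i<K. \<bar>a i - c i\<bar>)"
      by (simp add: sum_subtractf[symmetric] sum_mono)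
    ultimately show ?thesis
      using split[of a] close c_mass by linarith
  qed
  then have "p * sum a {K..<N} \<le> p * (1 - suminf c) + p * (2 * \<eta>)"
    using p(1) mult_left_mono by (fastforce simp flip: distrib_left)
  also have "p * (2 * \<eta>) \<le> 2 * \<eta>"
    using p \<open>0 \<le> \<eta>\<close> by (intro mult_left_le_one_le) auto
  finally have "p * sum a {K..<N} \<le> p * (1 - suminf c) + 2 * \<eta>"
    by simp
  moreover have "S_gamma a \<omega> \<le> (\<Sum>i<N. a i * of_bool (\<omega> i)) + (1 - (\<Sum>i<N. a i))"
    using S_gamma_le_sum_plus_tail[of a, OF stake_seqD(3,1)[OF a]] stake_seqD(4)[OF a] by simp
  ultimately show ?thesis
    using head a_mass split[of "\<lambda>i. a i * of_bool (\<omega> i)"] by (simp add: algebra_simps)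
qed

text \<open>Stakes after \<open>K\<close> are at most \<open>\<delta>\<close>, so by Hoeffding their payout exceeds its mean by
  \<open>\<eta>\<close> only with probability \<open>exp (-2 \<eta>\<^sup>2 / \<delta>)\<close>; stakes before \<open>K\<close> are close to \<open>c\<close>.\<close>
lemma prob_ge_le_prob_ge_lim:
  assumes p: "0 \<le> p" "p \<le> 1" and a: "stake_seq a" and c: "summable c" "\<And>i. 0 \<le> c i"
    and close: "(\<Sum>i<K. \<bar>a i - c i\<bar>) \<le> \<eta>" and c_mass: "suminf c - \<eta> \<le> (\<Sum>i<K. c i)"
    and small: "a K \<le> \<delta>" and "\<eta> > 0" "\<delta> > 0"
  shows "prob_ge p a t \<le> prob_ge_lim p c (t - 5 * \<eta>) + exp (-2 * \<eta>\<^sup>2 / \<delta>)"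
proof -
  interpret prob_space "bern_seq p"
    using prob_space_bern_seq[OF p] .
  have "(\<lambda>N. \<Sum>i<N. a i) \<longlonglongrightarrow> 1"
    using a by (simp add: stake_seq_def sums_def)
  then have "\<forall>\<^sub>F N in sequentially. 1 - \<eta> < (\<Sum>i<N. a i)"
    using \<open>\<eta> > 0\<close> by (intro order_tendstoD(1)) auto
  then obtain N0 where N0: "\<And>N. N \<ge> N0 \<Longrightarrow> 1 - \<eta> < (\<Sum>i<N. a i)"
    unfolding eventually_sequentially by blast
  define N where "N = max K N0"
  have N: "1 - \<eta> \<le> (\<Sum>i<N. a i)" "K \<le> N"
    using N0[of N] by (auto simp: N_def)
  define E where "E = {\<omega>. p * sum a {K..<N} + \<eta> \<le> (\<Sum>i\<in>{K..<N}. a i * of_bool (\<omega> i))}"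
  define A where "A = {\<omega>. t - 5 * \<eta> \<le> S_gamma c \<omega> + (1 - suminf c) * p}"
  have "{\<omega>. t \<le> S_gamma a \<omega>} \<subseteq> A \<union> E"
  proof
    fix \<omega>
    assume "\<omega> \<in> {\<omega>. t \<le> S_gamma a \<omega>}"
    then show "\<omega> \<in> A \<union> E"
      using S_gamma_le_lim_plus_deviation[OF a c p N(2) close c_mass N(1), of \<omega>]
      unfolding A_def E_def by auto
  qed
  moreover have [measurable]: "S_gamma c \<in> borel_measurable (bern_seq p)"
    by (rule borel_measurable_S_gamma[OF c])
  moreover have [measurable]: "S_gamma a \<in> borel_measurable (bern_seq p)"
    using borel_measurable_S_gamma stake_seqD[OF a] by blast
  moreover have "A \<in> events" "E \<in> events"
    unfolding A_def E_def by (intro sets_bern_seq_Collect; measurable)+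
  ultimately have "prob_ge p a t \<le> prob A + prob E"
    unfolding prob_ge_def
    by (intro order_trans[OF finite_measure_mono measure_Un_le]) (auto intro: sets_bern_seq_Collect)
  moreover have "prob A = prob_ge_lim p c (t - 5 * \<eta>)"
    by (simp add: A_def prob_ge_lim_def)
  moreover have "prob E \<le> exp (-2 * \<eta>\<^sup>2 / \<delta>)"
    unfolding E_def
  proof (rule bern_seq_weighted_sum_tail_bound[OF p])
    show "0 \<le> a i \<and> a i \<le> \<delta>" if "i \<in> {K..<N}" for i
      using that small stake_seqD(1)[OF a] decseqD[OF stake_seqD(2)[OF a], of K i] by auto
    show "sum a {K..<N} \<le> 1"
      using sum_le_suminf[of a "{K..<N}"] stake_seqD[OF a] by simp
  qed (use \<open>\<eta> > 0\<close> \<open>\<delta> > 0\<close> in auto)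
  ultimately show ?thesis
    by linarith
qed

lemma prob_ge_limsup_le_prob_ge_lim:
  fixes cn :: "nat \<Rightarrow> nat \<Rightarrow> real"
  assumes p: "0 \<le> p" "p \<le> 1" and cn: "\<And>n. stake_seq (cn n)"
    and lim: "\<And>i. (\<lambda>n. cn n i) \<longlonglongrightarrow> c i" and tn: "tn \<longlonglongrightarrow> t" and "\<epsilon> > 0"
  shows "\<forall>\<^sub>F n in sequentially. prob_ge p (cn n) (tn n) \<le> prob_ge_lim p c t + \<epsilon>"
proof -
  interpret prob_space "bern_seq p"
    using prob_space_bern_seq[OF p] .
  note c = stake_seq_pointwise_limit[OF cn lim]
  have "random_variable borel (\<lambda>\<omega>. S_gamma c \<omega> + (1 - suminf c) * p)"
    using borel_measurable_S_gamma[OF c(3,1)] by measurable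
  from prob_ge_tendsto_at_left[OF this, of t]
  have "((\<lambda>s. prob_ge_lim p c s) \<longlongrightarrow> prob_ge_lim p c t) (at_left t)"
    by (simp add: prob_ge_lim_def)
  then have "\<forall>\<^sub>F s in at_left t. prob_ge_lim p c s < prob_ge_lim p c t + \<epsilon> / 2"
    using \<open>\<epsilon> > 0\<close> by (intro order_tendstoD(2)) auto
  then obtain b where "b < t" and b: "\<And>s. b < s \<Longrightarrow> s < t \<Longrightarrow> prob_ge_lim p c s < prob_ge_lim p c t + \<epsilon> / 2"
    unfolding eventually_at_left_field by blast
  define \<eta> where "\<eta> = (t - b) / 12"
  define \<delta> where "\<delta> = \<eta>\<^sup>2 * \<epsilon> / 2"
  have "\<eta> > 0" "\<delta> > 0"
    using \<open>b < t\<close> \<open>\<epsilon> > 0\<close> by (simp_all add: \<eta>_def \<delta>_def)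
  have "4 / \<epsilon> \<le> exp (4 / \<epsilon>)"
    using exp_ge_add_one_self[of "4 / \<epsilon>"] by linarith
  then have "exp (-2 * \<eta>\<^sup>2 / \<delta>) \<le> \<epsilon> / 4"
    using \<open>\<eta> > 0\<close> \<open>\<epsilon> > 0\<close> by (simp add: \<delta>_def exp_minus field_simps)
  obtain K where K: "c K < \<delta>" "suminf c - \<eta> < (\<Sum>i<K. c i)"
  proof -
    have "\<forall>\<^sub>F K in sequentially. c K < \<delta>"
      using summable_LIMSEQ_zero[OF c(3)] \<open>\<delta> > 0\<close> by (rule order_tendstoD(2))
    moreover have "\<forall>\<^sub>F K in sequentially. suminf c - \<eta> < (\<Sum>i<K. c i)"
      using summable_LIMSEQ[OF c(3)] by (rule order_tendstoD(1)) (use \<open>\<eta> > 0\<close> in simp)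
    ultimately obtain N where "\<forall>K\<ge>N. c K < \<delta> \<and> suminf c - \<eta> < (\<Sum>i<K. c i)"
      unfolding eventually_sequentially by (meson max.cobounded1 max.cobounded2 order_trans)
    then show ?thesis
      using that by blast
  qed
  have "\<forall>\<^sub>F n in sequentially. (\<Sum>i<K. \<bar>cn n i - c i\<bar>) < \<eta> \<and> cn n K < \<delta> \<and> t - \<eta> < tn n"
  proof (intro eventually_conj)
    have "(\<lambda>n. \<Sum>i<K. \<bar>cn n i - c i\<bar>) \<longlonglongrightarrow> (\<Sum>i<K. \<bar>c i - c i\<bar>)"
      by (intro tendsto_intros lim)
    then show "\<forall>\<^sub>F n in sequentially. (\<Sum>i<K. \<bar>cn n i - c i\<bar>) < \<eta>"
      using \<open>\<eta> > 0\<close> by (intro order_tendstoD(2)) auto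
    show "\<forall>\<^sub>F n in sequentially. cn n K < \<delta>"
      using lim K(1) by (rule order_tendstoD(2))
    show "\<forall>\<^sub>F n in sequentially. t - \<eta> < tn n"
      using tn \<open>\<eta> > 0\<close> by (intro order_tendstoD(1)) auto
  qed
  then show ?thesis
  proof (rule eventually_mono, elim conjE)
    fix n
    assume close: "(\<Sum>i<K. \<bar>cn n i - c i\<bar>) < \<eta>" and "cn n K < \<delta>" "t - \<eta> < tn n"
    have "prob_ge p (cn n) (tn n) \<le> prob_ge p (cn n) (t - \<eta>)"
      using prob_ge_antimono[OF p cn] \<open>t - \<eta> < tn n\<close> by simp
    also have "\<dots> \<le> prob_ge_lim p c (t - \<eta> - 5 * \<eta>) + exp (-2 * \<eta>\<^sup>2 / \<delta>)"
      using close K(2) \<open>cn n K < \<delta>\<close> \<open>\<eta> > 0\<close> \<open>\<delta> > 0\<close>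
      by (intro prob_ge_le_prob_ge_lim[OF p cn c(3,1), where K = K]) auto
    finally have "prob_ge p (cn n) (tn n)
        \<le> prob_ge_lim p c (t - \<eta> - 5 * \<eta>) + exp (-2 * \<eta>\<^sup>2 / \<delta>)" .
    moreover have "prob_ge_lim p c (t - \<eta> - 5 * \<eta>) < prob_ge_lim p c t + \<epsilon> / 2"
      using \<open>b < t\<close> unfolding \<eta>_def by (intro b) (simp_all add: field_simps)
    ultimately show "prob_ge p (cn n) (tn n) \<le> prob_ge_lim p c t + \<epsilon>"
      using \<open>exp (-2 * \<eta>\<^sup>2 / \<delta>) \<le> \<epsilon> / 4\<close> \<open>\<epsilon> > 0\<close> by linarith
  qed
qed

lemma frequently_of_eventually_subseq:
  assumes "strict_mono r" "\<forall>\<^sub>F k in sequentially. P (r k)"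
  shows "\<exists>\<^sub>F n in sequentially. P n"
  unfolding frequently_def
proof
  assume "\<forall>\<^sub>F n in sequentially. \<not> P n"
  then have "\<forall>\<^sub>F k in sequentially. \<not> P (r k)"
    using eventually_subseq[OF assms(1)] by blast
  with assms(2) have "\<forall>\<^sub>F k in sequentially. False"
    by eventually_elim simp
  then show False
    by simp
qed

lemma stake_seqs_limsup_attained:
  fixes cn :: "nat \<Rightarrow> nat \<Rightarrow> real"
  assumes p: "0 \<le> p" "p \<le> 1" "p < s" and cn: "\<And>n. stake_seq (cn n)" and un: "un \<longlonglongrightarrow> s"
  obtains c where "stake_seq c"
    "\<And>\<epsilon>. \<epsilon> > 0 \<Longrightarrow> \<exists>\<^sub>F n in sequentially. prob_ge p (cn n) (un n) \<le> prob_ge p c s + \<epsilon>"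
proof -
  obtain r c where r: "strict_mono r" and lim: "\<And>i. (\<lambda>k. cn (r k) i) \<longlonglongrightarrow> c i"
    using stake_seq_convergent_subseq[of cn, OF cn] by blast
  obtain c' where "stake_seq c'" and c': "prob_ge_lim p c s \<le> prob_ge p c' s"
    by (rule prob_ge_lim_le_rescaled[OF p stake_seq_pointwise_limit[OF cn lim]])
  have "\<exists>\<^sub>F n in sequentially. prob_ge p (cn n) (un n) \<le> prob_ge p c' s + \<epsilon>" if "\<epsilon> > 0" for \<epsilon>
  proof (rule frequently_of_eventually_subseq[OF r])
    have "(\<lambda>k. un (r k)) \<longlonglongrightarrow> s"
      using LIMSEQ_subseq_LIMSEQ[OF un r] by (simp add: comp_def)
    from prob_ge_limsup_le_prob_ge_lim[OF p(1,2) cn lim this that]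
    show "\<forall>\<^sub>F k in sequentially. prob_ge p (cn (r k)) (un (r k)) \<le> prob_ge p c' s + \<epsilon>"
      by eventually_elim (use c' in linarith)
  qed
  then show ?thesis
    by (rule that[OF \<open>stake_seq c'\<close>])
qed

lemma pi_fun_limsup_attained:
  assumes p: "0 \<le> p" "p \<le> 1" "p < s" and un: "un \<longlonglongrightarrow> s"
  obtains c where "stake_seq c"
    "\<And>\<epsilon>. \<epsilon> > 0 \<Longrightarrow> \<exists>\<^sub>F n in sequentially. pi_fun p (un n) \<le> prob_ge p c s + \<epsilon>"
proof -
  have "\<forall>n. \<exists>c. stake_seq c \<and> pi_fun p (un n) < prob_ge p c (un n) + 1 / Suc n"
  proof
    fix n
    have "(0::real) < 1 / Suc n"
      by simp
    then show "\<exists>c. stake_seq c \<and> pi_fun p (un n) < prob_ge p c (un n) + 1 / Suc n"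
      by (rule pi_fun_approx[OF p(1,2)]) blast
  qed
  from choice[OF this] obtain cn where cn: "\<And>n. stake_seq (cn n)"
    and near: "\<And>n. pi_fun p (un n) < prob_ge p (cn n) (un n) + 1 / Suc n"
    by blast
  obtain c where "stake_seq c"
    and c: "\<And>\<epsilon>. \<epsilon> > 0 \<Longrightarrow> \<exists>\<^sub>F n in sequentially. prob_ge p (cn n) (un n) \<le> prob_ge p c s + \<epsilon>"
    using stake_seqs_limsup_attained[where cn = cn, OF p cn un] by blast
  have "\<exists>\<^sub>F n in sequentially. pi_fun p (un n) \<le> prob_ge p c s + \<epsilon>" if "\<epsilon> > 0" for \<epsilon>
  proof -
    have "\<forall>\<^sub>F n in sequentially. 1 / Suc n < \<epsilon> / 2"
      using LIMSEQ_inverse_real_of_nat \<open>\<epsilon> > 0\<close> by (intro order_tendstoD(2)) (auto simp: inverse_eq_divide)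
    then show ?thesis
    proof (rule frequently_rev_mp[OF c[of "\<epsilon> / 2"] eventually_mono, rotated])
      fix n
      assume "1 / Suc n < \<epsilon> / 2"
      then show "prob_ge p (cn n) (un n) \<le> prob_ge p c s + \<epsilon> / 2 \<longrightarrow> pi_fun p (un n) \<le> prob_ge p c s + \<epsilon>"
        using near[of n] by linarith
    qed (use \<open>\<epsilon> > 0\<close> in simp)
  qed
  then show ?thesis
    by (rule that[OF \<open>stake_seq c\<close>])
qed

lemma pi_fun_attained:
  assumes "0 \<le> p" "p < t" "t \<le> 1"
  obtains c where "stake_seq c" "pi_fun p t = prob_ge p c t"
proof -
  have p: "0 \<le> p" "p \<le> 1" "p < t"
    using assms by auto
  obtain c where c: "stake_seq c"
    and freq: "\<And>\<epsilon>. \<epsilon> > 0 \<Longrightarrow> \<exists>\<^sub>F n in sequentially. pi_fun p t \<le> prob_ge p c t + \<epsilon>"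
    using pi_fun_limsup_attained[where un = "\<lambda>_. t", OF p tendsto_const] by blast
  have "pi_fun p t \<le> prob_ge p c t"
    by (rule field_le_epsilon) (use freq in simp)
  then show ?thesis
    using that[OF c] prob_ge_le_pi_fun[OF p(1,2) c, of t] by linarith
qed

lemma pi_fun_left_continuous:
  assumes p: "0 \<le> p" "p \<le> 1" "p \<le> s"
  shows "((\<lambda>u. pi_fun p u) \<longlongrightarrow> pi_fun p s) (at s within {p..<s})"
proof (cases "p = s")
  case False
  with p have "p < s"
    by simp
  define un where "un = (\<lambda>n. s - inverse (real (Suc n)))"
  have "un \<longlonglongrightarrow> s"
    using tendsto_diff[OF tendsto_const LIMSEQ_inverse_real_of_nat, of s] by (simp add: un_def)
  then obtain c where c: "stake_seq c"
    and freq: "\<And>\<epsilon>. \<epsilon> > 0 \<Longrightarrow> \<exists>\<^sub>F n in sequentially. pi_fun p (un n) \<le> prob_ge p c s + \<epsilon>"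
    using pi_fun_limsup_attained[OF p(1,2) \<open>p < s\<close>] by blast
  show ?thesis
  proof (rule tendstoI)
    fix \<epsilon> :: real
    assume "\<epsilon> > 0"
    obtain n where "pi_fun p (un n) \<le> prob_ge p c s + \<epsilon> / 2"
      using frequently_ex[OF freq[of "\<epsilon> / 2"]] \<open>\<epsilon> > 0\<close> by auto
    then have n: "pi_fun p (un n) \<le> pi_fun p s + \<epsilon> / 2"
      using prob_ge_le_pi_fun[OF p(1,2) c, of s] by linarith
    have "un n < s"
      by (simp add: un_def)
    show "\<forall>\<^sub>F u in at s within {p..<s}. dist (pi_fun p u) (pi_fun p s) < \<epsilon>"
      unfolding eventually_at
    proof (intro exI[of _ "s - un n"] conjI ballI impI)
      fix u
      assume "u \<in> {p..<s}" "u \<noteq> s \<and> dist u s < s - un n"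
      then have "un n \<le> u" "u \<le> s"
        by (auto simp: dist_real_def)
      then have "pi_fun p u \<le> pi_fun p (un n)" "pi_fun p s \<le> pi_fun p u"
        using pi_fun_antimono[OF p(1,2)] by auto
      then show "dist (pi_fun p u) (pi_fun p s) < \<epsilon>"
        using n \<open>\<epsilon> > 0\<close> by (simp add: dist_real_def)
    qed (use \<open>un n < s\<close> in simp)
  qed
qed simp

theorem theorem7:
  fixes p t :: real
  assumes "0 \<le> p" and "p < t" and "t \<le> 1"
  shows "(\<exists>c. stake_seq c \<and> pi_fun p t = prob_ge p c t) \<and>
         (\<forall>s\<in>{p..1}. ((\<lambda>u. pi_fun p u) \<longlongrightarrow> pi_fun p s) (at s within {p..<s}))"
  using pi_fun_attained[OF assms] pi_fun_left_continuous[OF assms(1)] assms by auto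

end
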